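(* On $\ell^2(\mathbb{N}_0)$ (indices starting at $0$) let $\mathbf{L}_1$ be the symmetric tridiagonal infinite matrix with zero diagonal and $[\mathbf{L}_1]_{m,m+1}=[\mathbf{L}_1]_{m+1,m}=\sqrt{m+1}$ for $m\ge0$, and let $\mathbf{L}_3=\operatorname{diag}(0,-1,0,-1,-1,-1,\dots)$. For $k\in\mathbb{Z}\setminus\{0\}$ set $\mathbf{C}_k=ik\mathbf{L}_1-\mathbf{L}_3$ and let $\mathbf{P}_k$ be the infinite matrix equal to the identity except that its upper-left $4\times4$ block is $$\begin{pmatrix}1&-i\alpha/k&0&0\\ i\alpha/k&1&0&0\\0&0&1&-i\beta/2k\\0&0&i\beta/2k&1\end{pmatrix}.$$ With $\alpha=\beta=1/3$ for all $k$, one has, for all $k\in\mathbb{Z}\setminus\{0\}$, $$\mathbf{C}_k^*\mathbf{P}_k+\mathbf{P}_k\mathbf{C}_k\ \ge\ 2\mu\,\mathbf{P}_k,\qquad\mu=0.0206,$$ in the sense of quadratic forms, i.e. $\langle \mathbf{C}_ku,\mathbf{P}_ku\rangle+\langle\mathbf{P}_ku,\mathbf{C}_ku\rangle\ge2\mu\langle u,\mathbf{P}_ku\rangle$ for all finitely supported $u\in\ell^2(\mathbb{N}_0)$.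
   Context: $\langle\cdot,\cdot\rangle$ is the standard (sesquilinear) inner product on $\ell^2(\mathbb{N}_0)$ and $\mathbf{C}_k^*$ the Hermitian adjoint. *)

theory Defs
  imports Complex_Main "HOL-Library.Complex_Order"
begin

text \<open>Infinite matrices on l2(N_0) as functions nat => nat => complex; vectors as
  nat => complex. We only apply them to finitely supported vectors.\<close>

definition fin_supp :: "(nat \<Rightarrow> complex) \<Rightarrow> bool" where
  "fin_supp u \<longleftrightarrow> finite {n. u n \<noteq> 0}"

definition matvec :: "(nat \<Rightarrow> nat \<Rightarrow> complex) \<Rightarrow> (nat \<Rightarrow> complex) \<Rightarrow> nat \<Rightarrow> complex" where
  "matvec A u m = (\<Sum>n\<in>{n. u n \<noteq> 0}. A m n * u n)"

definition inner_l2 :: "(nat \<Rightarrow> complex) \<Rightarrow> (nat \<Rightarrow> complex) \<Rightarrow> complex" where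
  "inner_l2 x y = (\<Sum>n\<in>{n. x n \<noteq> 0}. x n * cnj (y n))"

definition L1 :: "nat \<Rightarrow> nat \<Rightarrow> complex" where
  "L1 m n = (if n = m + 1 then complex_of_real (sqrt (real m + 1))
             else if m = n + 1 then complex_of_real (sqrt (real n + 1)) else 0)"

definition L3 :: "nat \<Rightarrow> nat \<Rightarrow> complex" where
  "L3 m n = (if m = n \<and> m \<noteq> 0 \<and> m \<noteq> 2 then -1 else 0)"

definition Cmat :: "int \<Rightarrow> nat \<Rightarrow> nat \<Rightarrow> complex" where
  "Cmat k m n = \<i> * of_int k * L1 m n - L3 m n"

definition Pmat :: "real \<Rightarrow> real \<Rightarrow> int \<Rightarrow> nat \<Rightarrow> nat \<Rightarrow> complex" where
  "Pmat \<alpha> \<beta> k m n =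
     (if m = 0 \<and> n = 1 then - \<i> * of_real \<alpha> / of_int k
      else if m = 1 \<and> n = 0 then \<i> * of_real \<alpha> / of_int k
      else if m = 2 \<and> n = 3 then - \<i> * of_real \<beta> / (2 * of_int k)
      else if m = 3 \<and> n = 2 then \<i> * of_real \<beta> / (2 * of_int k)
      else if m = n then 1 else 0)"

end

theory Submission
  imports Defs
begin

text \<open>From index 4 on, \<open>P\<^sub>k\<close> and \<open>-L\<^sub>3\<close> both act as the identity, so the
  density of the form \<open>\<langle>C\<^sub>ku, P\<^sub>ku\<rangle> + \<langle>P\<^sub>ku, C\<^sub>ku\<rangle> - 2\<mu>\<langle>u, P\<^sub>ku\<rangle>\<close> at index \<open>m\<close> is
  \<open>2(1 - \<mu>)|u\<^sub>m|\<^sup>2\<close> plus the discrete divergence of a flux coming from the skew-adjoint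
  part \<open>ikL\<^sub>1\<close>. Summing, the flux telescopes down to index 3, and what remains is an
  explicit Hermitian form in \<open>u\<^sub>0, \<dots>, u\<^sub>4\<close>. That form is a sum of five positive
  semidefinite \<open>2 \<times> 2\<close> forms and positive multiples of \<open>|u\<^sub>m|\<^sup>2\<close>; the parameter \<open>k\<close> only
  enters through off-diagonal entries of size \<open>O(1/|k|)\<close>, which are worst for \<open>|k| = 1\<close>.\<close>

lemma fin_supp_vanishes_beyond:
  assumes "fin_supp u"
  obtains N where "\<And>n. n \<ge> N \<Longrightarrow> u n = 0"
proof -
  from assms obtain N where "\<forall>n\<in>{n. u n \<noteq> 0}. n < N"
    unfolding fin_supp_def finite_nat_set_iff_bounded by blast
  then show ?thesis by (intro that) (auto simp flip: not_less)
qed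

lemma matvec_eq_sum:
  assumes "fin_supp u" "finite F" "\<And>n. n \<notin> F \<Longrightarrow> A m n = 0"
  shows "matvec A u m = (\<Sum>n\<in>F. A m n * u n)"
proof -
  have fin: "finite {n. u n \<noteq> 0}" using assms(1) by (simp add: fin_supp_def)
  have "matvec A u m = (\<Sum>n\<in>{n. u n \<noteq> 0} \<union> F. A m n * u n)"
    unfolding matvec_def by (rule sum.mono_neutral_left) (use fin assms(2) in auto)
  also have "\<dots> = (\<Sum>n\<in>F. A m n * u n)"
    by (rule sum.mono_neutral_right) (use fin assms in auto)
  finally show ?thesis .
qed

lemma inner_l2_eq_sum_lessThan:
  assumes "\<And>n. n \<ge> N \<Longrightarrow> x n = 0"
  shows "inner_l2 x y = (\<Sum>n<N. x n * cnj (y n))"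
  unfolding inner_l2_def
  by (rule sum.mono_neutral_left) (use assms not_less in auto)

lemma matvec_Cmat_0:
  assumes "fin_supp u"
  shows "matvec (Cmat k) u 0 = \<i> * of_int k * u 1"
proof -
  have "matvec (Cmat k) u 0 = (\<Sum>n\<in>{0, 1}. Cmat k 0 n * u n)"
    by (rule matvec_eq_sum) (use assms in \<open>auto simp: Cmat_def L1_def L3_def\<close>)
  then show ?thesis by (simp add: Cmat_def L1_def L3_def)
qed

lemma matvec_Cmat_Suc:
  assumes "fin_supp u"
  shows "matvec (Cmat k) u (Suc j) =
     \<i> * of_int k * (of_real (sqrt (real j + 1)) * u j + of_real (sqrt (real j + 2)) * u (Suc (Suc j)))
     + (if j = 1 then 0 else u (Suc j))"
proof -
  have "matvec (Cmat k) u (Suc j) = (\<Sum>n\<in>{j, Suc j, Suc (Suc j)}. Cmat k (Suc j) n * u n)"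
    by (rule matvec_eq_sum) (use assms in \<open>auto simp: Cmat_def L1_def L3_def\<close>)
  then show ?thesis by (cases "j = 1") (simp_all add: Cmat_def L1_def L3_def algebra_simps)
qed

lemma matvec_Pmat_block:
  assumes "fin_supp u"
  shows "matvec (Pmat \<alpha> \<beta> k) u 0 = u 0 + (- \<i> * of_real \<alpha> / of_int k) * u 1"
    and "matvec (Pmat \<alpha> \<beta> k) u 1 = u 1 + \<i> * of_real \<alpha> / of_int k * u 0"
    and "matvec (Pmat \<alpha> \<beta> k) u 2 = u 2 + (- \<i> * of_real \<beta> / (2 * of_int k)) * u 3"
    and "matvec (Pmat \<alpha> \<beta> k) u 3 = u 3 + \<i> * of_real \<beta> / (2 * of_int k) * u 2"
proof -
  have "matvec (Pmat \<alpha> \<beta> k) u m = (\<Sum>n\<in>{0, 1}. Pmat \<alpha> \<beta> k m n * u n)" if "m < 2" for m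
    by (rule matvec_eq_sum) (use assms that in \<open>auto simp: Pmat_def\<close>)
  moreover have "matvec (Pmat \<alpha> \<beta> k) u m = (\<Sum>n\<in>{2, 3}. Pmat \<alpha> \<beta> k m n * u n)"
    if "m \<in> {2, 3}" for m
    by (rule matvec_eq_sum) (use assms that in \<open>auto simp: Pmat_def\<close>)
  ultimately show "matvec (Pmat \<alpha> \<beta> k) u 0 = u 0 + (- \<i> * of_real \<alpha> / of_int k) * u 1"
    and "matvec (Pmat \<alpha> \<beta> k) u 1 = u 1 + \<i> * of_real \<alpha> / of_int k * u 0"
    and "matvec (Pmat \<alpha> \<beta> k) u 2 = u 2 + (- \<i> * of_real \<beta> / (2 * of_int k)) * u 3"
    and "matvec (Pmat \<alpha> \<beta> k) u 3 = u 3 + \<i> * of_real \<beta> / (2 * of_int k) * u 2"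
    by (simp_all add: Pmat_def)
qed

lemma matvec_Pmat_ge_4:
  assumes "fin_supp u" "m \<ge> 4"
  shows "matvec (Pmat \<alpha> \<beta> k) u m = u m"
proof -
  have "matvec (Pmat \<alpha> \<beta> k) u m = (\<Sum>n\<in>{m}. Pmat \<alpha> \<beta> k m n * u n)"
    by (rule matvec_eq_sum) (use assms in \<open>auto simp: Pmat_def\<close>)
  then show ?thesis using assms(2) by (simp add: Pmat_def)
qed

definition form_density :: "real \<Rightarrow> real \<Rightarrow> real \<Rightarrow> int \<Rightarrow> (nat \<Rightarrow> complex) \<Rightarrow> nat \<Rightarrow> complex" where
  "form_density \<alpha> \<beta> \<mu> k u m =
     matvec (Cmat k) u m * cnj (matvec (Pmat \<alpha> \<beta> k) u m)
     + matvec (Pmat \<alpha> \<beta> k) u m * cnj (matvec (Cmat k) u m)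
     - 2 * of_real \<mu> * (u m * cnj (matvec (Pmat \<alpha> \<beta> k) u m))"

definition flux :: "(nat \<Rightarrow> complex) \<Rightarrow> nat \<Rightarrow> complex" where
  "flux u m = of_real (sqrt (real m + 1)) * (u (Suc m) * cnj (u m) - cnj (u (Suc m)) * u m)"

lemma quadratic_form_eq_sum_form_density:
  assumes "fin_supp u" and N: "\<And>n. n \<ge> N \<Longrightarrow> u n = 0"
  shows "inner_l2 (matvec (Cmat k) u) (matvec (Pmat \<alpha> \<beta> k) u)
           + inner_l2 (matvec (Pmat \<alpha> \<beta> k) u) (matvec (Cmat k) u)
           - 2 * of_real \<mu> * inner_l2 u (matvec (Pmat \<alpha> \<beta> k) u)
         = (\<Sum>m<N + 5. form_density \<alpha> \<beta> \<mu> k u m)"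
proof -
  have u: "u m = 0" if "m \<ge> N + 5" for m using N that by simp
  have C: "matvec (Cmat k) u m = 0" if "m \<ge> N + 5" for m
  proof -
    obtain j where "m = Suc j" "j \<ge> N" using \<open>m \<ge> N + 5\<close> by (cases m) auto
    then show ?thesis using N by (simp add: matvec_Cmat_Suc[OF assms(1)])
  qed
  have P: "matvec (Pmat \<alpha> \<beta> k) u m = 0" if "m \<ge> N + 5" for m
    using that u matvec_Pmat_ge_4[OF assms(1)] by simp
  show ?thesis
    unfolding form_density_def
    by (simp add: inner_l2_eq_sum_lessThan[OF C] inner_l2_eq_sum_lessThan[OF P]
        inner_l2_eq_sum_lessThan[OF u] sum.distrib sum_subtractf sum_distrib_left)
qed

lemma form_density_eq_divergence:
  assumes "fin_supp u" "j \<ge> 3"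
  shows "form_density \<alpha> \<beta> \<mu> k u (Suc j) =
           (2 - 2 * of_real \<mu>) * (u (Suc j) * cnj (u (Suc j)))
           + \<i> * of_int k * (flux u (Suc j) - flux u j)"
  using assms
  by (simp add: form_density_def flux_def matvec_Cmat_Suc matvec_Pmat_ge_4 algebra_simps)

lemma sum_form_density_telescope:
  assumes "fin_supp u" and N: "\<And>n. n \<ge> N \<Longrightarrow> u n = 0"
  shows "(\<Sum>m<N + 5. form_density \<alpha> \<beta> \<mu> k u m)
         = (\<Sum>m<4. form_density \<alpha> \<beta> \<mu> k u m) - \<i> * of_int k * flux u 3
           + (\<Sum>m\<in>{4..<N + 5}. (2 - 2 * of_real \<mu>) * (u m * cnj (u m)))"
proof -
  let ?d = "\<lambda>m. (2 - 2 * of_real \<mu>) * (u m * cnj (u m))"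
  have "(\<Sum>m\<in>{4..<N + 5}. form_density \<alpha> \<beta> \<mu> k u m)
      = (\<Sum>j\<in>{3..<N + 4}. form_density \<alpha> \<beta> \<mu> k u (Suc j))"
    using sum.shift_bounds_Suc_ivl[of "form_density \<alpha> \<beta> \<mu> k u" 3 "N + 4"]
    by (simp add: add.commute)
  also have "\<dots> = (\<Sum>j\<in>{3..<N + 4}. ?d (Suc j))
                    + \<i> * of_int k * (\<Sum>j\<in>{3..<N + 4}. flux u (Suc j) - flux u j)"
    using form_density_eq_divergence[OF assms(1)] by (simp add: sum.distrib sum_distrib_left)
  also have "(\<Sum>j\<in>{3..<N + 4}. flux u (Suc j) - flux u j) = - flux u 3"
    using sum_Suc_diff'[of 3 "N + 4" "flux u"] N by (simp add: flux_def)
  also have "(\<Sum>j\<in>{3..<N + 4}. ?d (Suc j)) = (\<Sum>m\<in>{4..<N + 5}. ?d m)"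
    using sum.shift_bounds_Suc_ivl[of ?d 3 "N + 4"] by (simp add: add.commute)
  finally have tail: "(\<Sum>m\<in>{4..<N + 5}. form_density \<alpha> \<beta> \<mu> k u m)
      = (\<Sum>m\<in>{4..<N + 5}. ?d m) - \<i> * of_int k * flux u 3"
    by simp
  have "(\<Sum>m<N + 5. form_density \<alpha> \<beta> \<mu> k u m)
      = (\<Sum>m<4. form_density \<alpha> \<beta> \<mu> k u m)
        + (\<Sum>m\<in>{4..<N + 5}. form_density \<alpha> \<beta> \<mu> k u m)"
    using sum.atLeastLessThan_concat[of 0 4 "N + 5" "form_density \<alpha> \<beta> \<mu> k u"]
    by (simp add: atLeast0LessThan)
  then show ?thesis unfolding tail by (simp add: algebra_simps)
qed

definition herm2_form :: "real \<Rightarrow> real \<Rightarrow> complex \<Rightarrow> complex \<Rightarrow> complex \<Rightarrow> complex" where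
  "herm2_form a b c z w = of_real a * z * cnj z + of_real b * w * cnj w + cnj z * c * w + z * cnj c * cnj w"

lemma mult_cnj_self_nonneg: "0 \<le> z * cnj z"
  by (simp add: complex_mult_cnj less_eq_complex_def)

lemma of_real_nonneg_complex: "0 \<le> r \<Longrightarrow> 0 \<le> complex_of_real r"
  by (simp add: less_eq_complex_def)

lemma herm2_form_nonneg:
  assumes a: "a \<ge> 0" and b: "b \<ge> 0" and c: "(cmod c)\<^sup>2 \<le> a * b"
  shows "0 \<le> herm2_form a b c z w"
proof -
  define Z W C where "Z = cmod z" and "W = cmod w" and "C = cmod c"
  have "z * cnj c * cnj w = cnj (cnj z * c * w)" by simp
  then have "cnj z * c * w + z * cnj c * cnj w = of_real (2 * Re (cnj z * c * w))"
    by (simp only: complex_add_cnj)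
  then have form: "herm2_form a b c z w = of_real (a * Z\<^sup>2 + b * W\<^sup>2 + 2 * Re (cnj z * c * w))"
    unfolding herm2_form_def Z_def W_def
    by (simp add: complex_norm_square[symmetric] mult.assoc add.assoc)
  have Re_ge: "- Re (cnj z * c * w) \<le> Z * C * W"
    using abs_Re_le_cmod[of "cnj z * c * w"] by (simp add: Z_def W_def C_def norm_mult)
  have AM_GM: "2 * Z * C * W \<le> a * Z\<^sup>2 + b * W\<^sup>2"
  proof (rule power2_le_imp_le)
    have "(2 * Z * C * W)\<^sup>2 = 4 * C\<^sup>2 * (Z\<^sup>2 * W\<^sup>2)" by (simp add: power_mult_distrib)
    also have "\<dots> \<le> 4 * (a * b) * (Z\<^sup>2 * W\<^sup>2)"
      using c unfolding C_def by (intro mult_right_mono mult_left_mono) auto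
    also have "\<dots> \<le> (a * Z\<^sup>2 + b * W\<^sup>2)\<^sup>2"
      using sum_squares_ge_zero[of "a * Z\<^sup>2 - b * W\<^sup>2" 0]
      by (simp add: power2_eq_square algebra_simps)
    finally show "(2 * Z * C * W)\<^sup>2 \<le> (a * Z\<^sup>2 + b * W\<^sup>2)\<^sup>2" .
    show "0 \<le> a * Z\<^sup>2 + b * W\<^sup>2" using a b by simp
  qed
  show ?thesis
    unfolding form by (rule of_real_nonneg_complex) (use Re_ge AM_GM in linarith)
qed

text \<open>A sum-of-squares certificate for the head form: the weights of the blocks split
  the diagonal of the head form so that each block satisfies \<open>|c|\<^sup>2 \<le> ab\<close> for all
  \<open>|k| \<ge> 1\<close>, and the leftover diagonal coefficients are positive.\<close>

definition head_sos :: "int \<Rightarrow> complex \<Rightarrow> complex \<Rightarrow> complex \<Rightarrow> complex \<Rightarrow> complex \<Rightarrow> complex" where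
  "head_sos k z0 z1 z2 z3 z4 =
     herm2_form 0.09 1.15 (- \<i> * of_real ((1 - 2 * 0.0206) / 3) / of_int k) z0 z1
     + herm2_form 0.535 0.416 (of_real (sqrt 2 / 3)) z0 z2
     + herm2_form 0.1 (5/9) (of_real (- sqrt 2 / 6)) z1 z3
     + herm2_form 0.037 0.7 (- \<i> * of_real ((1 - 2 * 0.0206) / 6) / of_int k) z2 z3
     + herm2_form 0.059 1.9 (of_real (1/3)) z2 z4
     + of_real (2/3 - 2 * 0.0206 - 0.09 - 0.535) * (z0 * cnj z0)
     + of_real (2 - 2/3 - 2 * 0.0206 - 1.15 - 0.1) * (z1 * cnj z1)
     + of_real (sqrt 3 / 3 - 2 * 0.0206 - 0.416 - 0.037 - 0.059) * (z2 * cnj z2)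
     + of_real (2 - sqrt 3 / 3 - 2 * 0.0206 - 5/9 - 0.7) * (z3 * cnj z3)
     + of_real (2 - 2 * 0.0206 - 1.9) * (z4 * cnj z4)"

lemma head_form_eq_head_sos:
  assumes "k \<noteq> 0" "fin_supp u"
  shows "(\<Sum>m<4. form_density (1/3) (1/3) 0.0206 k u m) - \<i> * of_int k * flux u 3
           + (2 - 2 * of_real 0.0206) * (u 4 * cnj (u 4))
         = head_sos k (u 0) (u 1) (u 2) (u 3) (u 4)"
proof -
  have sum4: "(\<Sum>m<4. f m) = f 0 + f 1 + f 2 + f 3" for f :: "nat \<Rightarrow> complex"
    by (simp add: numeral_eq_Suc)
  have C: "matvec (Cmat k) u 0 = \<i> * of_int k * u 1"
    "matvec (Cmat k) u 1 = \<i> * of_int k * (u 0 + of_real (sqrt 2) * u 2) + u 1"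
    "matvec (Cmat k) u 2 = \<i> * of_int k * (of_real (sqrt 2) * u 1 + of_real (sqrt 3) * u 3)"
    "matvec (Cmat k) u 3 = \<i> * of_int k * (of_real (sqrt 3) * u 2 + 2 * u 4) + u 3"
    using matvec_Cmat_0[OF assms(2), of k] matvec_Cmat_Suc[OF assms(2), of k 0]
      matvec_Cmat_Suc[OF assms(2), of k 1] matvec_Cmat_Suc[OF assms(2), of k 2]
    by (simp_all add: numeral_eq_Suc algebra_simps)
  have flux3: "flux u 3 = 2 * (u 4 * cnj (u 3) - cnj (u 4) * u 3)"
    by (simp add: flux_def numeral_eq_Suc)
  have "(of_int k :: complex) \<noteq> 0" using assms(1) by simp
  then show ?thesis
    unfolding sum4 form_density_def C matvec_Pmat_block[OF assms(2)] flux3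
      head_sos_def herm2_form_def
    by (simp add: field_simps of_real_diff)
qed

lemma head_sos_nonneg:
  assumes "k \<noteq> 0"
  shows "0 \<le> head_sos k z0 z1 z2 z3 z4"
proof -
  have diag: "0 \<le> of_real r * (z * cnj z)" if "r \<ge> 0" for r z
    using of_real_nonneg_complex[OF that] mult_cnj_self_nonneg by (rule mult_nonneg_nonneg)
  have real_block: "0 \<le> herm2_form a b (of_real r) z w"
    if "a \<ge> 0" "b \<ge> 0" "r\<^sup>2 \<le> a * b" for a b r z w
    using herm2_form_nonneg that by simp
  have imag_block: "0 \<le> herm2_form a b (- \<i> * of_real r / of_int k) z w"
    if "a \<ge> 0" "b \<ge> 0" "r\<^sup>2 \<le> a * b" for a b r z w
  proof (rule herm2_form_nonneg[OF that(1,2)])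
    have "\<bar>r\<bar> / \<bar>real_of_int k\<bar> \<le> \<bar>r\<bar>"
      using assms by (simp add: divide_le_eq mult_le_cancel_left1) linarith
    then have "cmod (- \<i> * of_real r / of_int k) \<le> \<bar>r\<bar>"
      by (simp add: norm_divide norm_mult)
    then show "(cmod (- \<i> * of_real r / of_int k))\<^sup>2 \<le> a * b"
      using that(3) power_mono[of _ "\<bar>r\<bar>" 2] by fastforce
  qed
  have "1.7 \<le> sqrt 3" "sqrt 3 \<le> 1.8"
    by (rule real_le_rsqrt, simp add: power2_eq_square)
      (rule real_le_lsqrt, simp_all add: power2_eq_square)
  then show ?thesis unfolding head_sos_def
    by (intro add_nonneg_nonneg imag_block real_block diag)
      (simp_all add: power2_eq_square power_divide)
qed

theorem lemma4:
  fixes k :: int and u :: "nat \<Rightarrow> complex"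
  assumes "k \<noteq> 0" and "fin_supp u"
  shows "inner_l2 (matvec (Cmat k) u) (matvec (Pmat (1/3) (1/3) k) u)
           + inner_l2 (matvec (Pmat (1/3) (1/3) k) u) (matvec (Cmat k) u)
         \<ge> 2 * complex_of_real 0.0206 * inner_l2 u (matvec (Pmat (1/3) (1/3) k) u)"
proof -
  obtain N where N: "\<And>n. n \<ge> N \<Longrightarrow> u n = 0"
    using fin_supp_vanishes_beyond[OF assms(2)] by blast
  let ?C = "matvec (Cmat k) u" and ?P = "matvec (Pmat (1/3) (1/3) k) u"
  let ?d = "\<lambda>m. (2 - 2 * complex_of_real 0.0206) * (u m * cnj (u m))"
  let ?tail = "\<Sum>m\<in>{5..<N + 5}. ?d m"
  have "inner_l2 ?C ?P + inner_l2 ?P ?C - 2 * complex_of_real 0.0206 * inner_l2 u ?P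
      = (\<Sum>m<N + 5. form_density (1/3) (1/3) 0.0206 k u m)"
    by (rule quadratic_form_eq_sum_form_density[OF assms(2) N])
  also have "\<dots> = (\<Sum>m<4. form_density (1/3) (1/3) 0.0206 k u m) - \<i> * of_int k * flux u 3
                  + ?d 4 + ?tail"
  proof -
    have "(\<Sum>m\<in>{4..<N + 5}. ?d m) = ?d 4 + ?tail"
      using sum.atLeast_Suc_lessThan[of 4 "N + 5" ?d] by simp
    then show ?thesis
      by (simp only: sum_form_density_telescope[OF assms(2) N] add.assoc)
  qed
  also have "\<dots> = head_sos k (u 0) (u 1) (u 2) (u 3) (u 4) + ?tail"
    by (simp only: head_form_eq_head_sos[OF assms])
  finally have "inner_l2 ?C ?P + inner_l2 ?P ?C - 2 * complex_of_real 0.0206 * inner_l2 u ?P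
      = head_sos k (u 0) (u 1) (u 2) (u 3) (u 4) + ?tail" .
  moreover have "0 \<le> ?tail"
    by (intro sum_nonneg mult_nonneg_nonneg mult_cnj_self_nonneg) (simp add: less_eq_complex_def)
  ultimately have "0 \<le> inner_l2 ?C ?P + inner_l2 ?P ?C - 2 * complex_of_real 0.0206 * inner_l2 u ?P"
    using head_sos_nonneg[OF assms(1)] by (simp only: add_nonneg_nonneg)
  then show ?thesis by (simp only: diff_ge_0_iff_ge)
qed

end
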